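(* Let $f_1,\dots,f_n:\mathbb{R}^p\to\mathbb{R}$ be continuously differentiable, let $m>0$, and consider $g(x)=\frac1n\sum_{i=1}^nf_i(x)+\frac m2\|x\|^2$ with minimizer $x^*$. Assume $\sum_{i=1}^nf_i\in\mathcal F(0,L)$ and $i_k$ sampled IID uniformly from $\{1,\dots,n\}$. Consider SDCA with stepsize $\alpha$ initialized from arbitrary $y_i^0\in\mathbb{R}^p$. 1. If every $f_i\in\mathcal F(0,L)$, then for any $0<\alpha\le\frac2{L+2mn}$, $$\mathbb{E}\left[\|x^k-x^*\|^2+\frac{\alpha}{(1-\alpha mn)mn}\sum_{i=1}^n\|y_i^k+\nabla f_i(x^* )\|^2\right]\le(1-m\alpha)^kR^0,$$ where $R^0=\|x^0-x^*\|^2+\frac{\alpha}{(1-\alpha mn)mn}\sum_i\|y_i^0+\nabla f_i(x^* )\|^2$. 2. If every $f_i$ is $L$-smooth, then the bound of item 1 holds for any $0<\alpha\le\frac m{L^2+m^2n}$. In particular, for $\alpha=\frac m{m^2n+L^2}$, $$\mathbb{E}\left[\|x^k-x^*\|^2+\frac1{L^2n}\sum_{i=1}^n\|y_i^k+\nabla f_i(x^* )\|^2\right]\le\left(1-\frac{m^2}{m^2n+L^2}\right)^kR^0,$$ where $R^0=\|x^0-x^*\|^2+\frac1{L^2n}\sum_i\|y_i^0+\nabla f_i(x^* )\|^2$.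
   Context: A continuously differentiable $f:\mathbb{R}^p\to\mathbb{R}$ is $L$-smooth if $\|\nabla f(x)-\nabla f(y)\|\le L\|x-y\|$ for all $x,y$; $\mathcal F(0,L)$ denotes the convex, continuously differentiable, $L$-smooth functions. SDCA (without duality): $x^k=\frac1{mn}\sum_{i=1}^ny_i^k$ for all $k\ge0$, and $y_i^{k+1}=y_i^k-\alpha mn(\nabla f_i(x^k)+y_i^k)$ if $i=i_k$, $y_i^{k+1}=y_i^k$ otherwise. Expectation is over the random indices. *)

theory Defs
  imports "HOL-Analysis.Analysis"
begin

text \<open>SDCA (without duality). Components are indexed by 0..n-1.
  gr i is the gradient of f i, y0 the initial dual variables,
  I the sequence of sampled indices (I k = i_k).
  sdca_y ... k i is y_i^k.\<close>

primrec sdca_y :: "nat \<Rightarrow> real \<Rightarrow> real \<Rightarrow> (nat \<Rightarrow> 'a::real_vector \<Rightarrow> 'a)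
    \<Rightarrow> (nat \<Rightarrow> 'a) \<Rightarrow> (nat \<Rightarrow> nat) \<Rightarrow> nat \<Rightarrow> nat \<Rightarrow> 'a" where
  "sdca_y n m \<alpha> gr y0 I 0 = y0"
| "sdca_y n m \<alpha> gr y0 I (Suc k) =
     (let yk = sdca_y n m \<alpha> gr y0 I k;
          xk = (1 / (m * real n)) *\<^sub>R (\<Sum>j<n. yk j)
      in (\<lambda>i. if i = I k then yk i - (\<alpha> * m * real n) *\<^sub>R (gr i xk + yk i) else yk i))"

definition sdca_x :: "nat \<Rightarrow> real \<Rightarrow> real \<Rightarrow> (nat \<Rightarrow> 'a::real_vector \<Rightarrow> 'a)
    \<Rightarrow> (nat \<Rightarrow> 'a) \<Rightarrow> (nat \<Rightarrow> nat) \<Rightarrow> nat \<Rightarrow> 'a" where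
  "sdca_x n m \<alpha> gr y0 I k = (1 / (m * real n)) *\<^sub>R (\<Sum>j<n. sdca_y n m \<alpha> gr y0 I k j)"

text \<open>Expectation over i_0,...,i_{k-1} IID uniform on {0..<n}: the average over
  all n^k index sequences (only I j for j < k influences step k).\<close>
definition expect_idx :: "nat \<Rightarrow> nat \<Rightarrow> ((nat \<Rightarrow> nat) \<Rightarrow> real) \<Rightarrow> real" where
  "expect_idx n k F = (\<Sum>I\<in>PiE {..<k} (\<lambda>_. {..<n}). F I) / real n ^ k"

definition L_smooth_grad :: "real \<Rightarrow> ('a::real_normed_vector \<Rightarrow> 'a) \<Rightarrow> bool" where
  "L_smooth_grad L G \<longleftrightarrow> (\<forall>x y. norm (G x - G y) \<le> L * norm (x - y))"

definition in_F0L :: "real \<Rightarrow> ('a::real_normed_vector \<Rightarrow> real) \<Rightarrow> ('a \<Rightarrow> 'a) \<Rightarrow> bool" where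
  "in_F0L L h G \<longleftrightarrow> convex_on UNIV h \<and> L_smooth_grad L G"

end

theory Submission
  imports Defs
begin

text \<open>With \<open>c = \<alpha> / ((1 - \<alpha> m n) m n)\<close> consider the Lyapunov function
  \<open>V(y) = \<parallel>x - x\<^sup>*\<parallel>\<^sup>2 + c \<Sum>\<^sub>i \<parallel>y\<^sub>i + \<nabla>f\<^sub>i(x\<^sup>*)\<parallel>\<^sup>2\<close>, where \<open>x\<close> is the mean \<open>(1/(mn)) \<Sum>\<^sub>i y\<^sub>i\<close>.
  Optimality of \<open>x\<^sup>*\<close> gives \<open>\<Sum>\<^sub>i \<nabla>f\<^sub>i(x\<^sup>*) = -mn x\<^sup>*\<close>, so
  \<open>x - x\<^sup>* = (1/(mn)) \<Sum>\<^sub>i e\<^sub>i\<close> with \<open>e\<^sub>i = y\<^sub>i + \<nabla>f\<^sub>i(x\<^sup>*)\<close>.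
  Updating coordinate \<open>i\<close> moves \<open>x\<close> by \<open>-\<alpha>(d\<^sub>i + e\<^sub>i)\<close>, \<open>d\<^sub>i = \<nabla>f\<^sub>i(x) - \<nabla>f\<^sub>i(x\<^sup>*)\<close>; expanding
  both squares exactly, the choice of \<open>c\<close> makes all mixed terms \<open>d\<^sub>i \<bullet> e\<^sub>i\<close> cancel, and
  averaging over \<open>i\<close> leaves
  \<open>(1 - m\<alpha>) V(y) - (\<alpha>/n)(mn\<parallel>x - x\<^sup>*\<parallel>\<^sup>2 + 2 (x - x\<^sup>*) \<bullet> \<Sum>\<^sub>i d\<^sub>i - \<alpha>/(1 - \<alpha>mn) \<Sum>\<^sub>i \<parallel>d\<^sub>i\<parallel>\<^sup>2)\<close>.
  The bracket is nonnegative under the stepsize restrictions: for item 1 by co-coercivity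
  \<open>\<parallel>d\<^sub>i\<parallel>\<^sup>2 \<le> L (x - x\<^sup>*) \<bullet> d\<^sub>i\<close> of gradients of functions in \<open>\<F>(0,L)\<close>, for item 2 by the
  Lipschitz bound \<open>\<parallel>d\<^sub>i\<parallel> \<le> L\<parallel>x - x\<^sup>*\<parallel>\<close> together with monotonicity of the gradient of the
  convex sum. Hence the expected Lyapunov value contracts by \<open>1 - m\<alpha>\<close> per step.\<close>

section \<open>First-order facts for convex and smooth functions\<close>

lemma has_real_derivative_along_line:
  fixes F :: "'a::real_inner \<Rightarrow> real"
  assumes grad: "\<And>z. (F has_derivative (\<lambda>h. G z \<bullet> h)) (at z)"
  shows "((\<lambda>t. F (x + t *\<^sub>R h)) has_real_derivative (G (x + t *\<^sub>R h) \<bullet> h)) (at t)"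
proof -
  have "((\<lambda>t. x + t *\<^sub>R h) has_derivative (\<lambda>s. s *\<^sub>R h)) (at t)"
    by (auto intro!: derivative_eq_intros)
  from has_derivative_compose[OF this grad]
  have "((\<lambda>t. F (x + t *\<^sub>R h)) has_derivative (\<lambda>s. G (x + t *\<^sub>R h) \<bullet> (s *\<^sub>R h))) (at t)"
    by (simp add: o_def)
  moreover have "(\<lambda>s. G (x + t *\<^sub>R h) \<bullet> (s *\<^sub>R h)) = (*) (G (x + t *\<^sub>R h) \<bullet> h)"
    by (auto simp: fun_eq_iff)
  ultimately show ?thesis
    unfolding has_field_derivative_def by simp
qed

lemma convex_on_gradient_inequality:
  fixes F :: "'a::real_inner \<Rightarrow> real"
  assumes convex: "convex_on UNIV F" and grad: "\<And>z. (F has_derivative (\<lambda>h. G z \<bullet> h)) (at z)"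
  shows "F x + G x \<bullet> (y - x) \<le> F y"
proof -
  define \<psi> where "\<psi> t = F (x + t *\<^sub>R (y - x))" for t
  have "convex_on UNIV \<psi>"
  proof (rule convex_onI)
    fix t a b :: real assume t: "0 < t" "t < 1"
    have "x + ((1 - t) *\<^sub>R a + t *\<^sub>R b) *\<^sub>R (y - x)
        = (1 - t) *\<^sub>R (x + a *\<^sub>R (y - x)) + t *\<^sub>R (x + b *\<^sub>R (y - x))"
      by (simp add: algebra_simps)
    then show "\<psi> ((1 - t) *\<^sub>R a + t *\<^sub>R b) \<le> (1 - t) * \<psi> a + t * \<psi> b"
      unfolding \<psi>_def using convex_onD[OF convex, of t] t by simp
  qed simp
  moreover have "(\<psi> has_real_derivative (G x \<bullet> (y - x))) (at 0)"
    using has_real_derivative_along_line[OF grad, of x "y - x" 0] by (simp add: \<psi>_def[abs_def])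
  ultimately have "\<psi> 1 - \<psi> 0 \<ge> (G x \<bullet> (y - x)) * (1 - 0)"
    by (intro convex_on_imp_above_tangent) auto
  then show ?thesis by (simp add: \<psi>_def)
qed

lemma convex_on_gradient_monotone:
  fixes F :: "'a::real_inner \<Rightarrow> real"
  assumes convex: "convex_on UNIV F" and grad: "\<And>z. (F has_derivative (\<lambda>h. G z \<bullet> h)) (at z)"
  shows "0 \<le> (G y - G x) \<bullet> (y - x)"
  using convex_on_gradient_inequality[OF convex grad, of x y]
    convex_on_gradient_inequality[OF convex grad, of y x]
  by (simp add: inner_diff_left inner_diff_right)

lemma L_smooth_grad_descent:
  fixes F :: "'a::real_inner \<Rightarrow> real"
  assumes grad: "\<And>z. (F has_derivative (\<lambda>h. G z \<bullet> h)) (at z)" and smooth: "L_smooth_grad L G"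
  shows "F y \<le> F x + G x \<bullet> (y - x) + L / 2 * (norm (y - x))\<^sup>2"
proof -
  define h where "h = y - x"
  define \<phi> where "\<phi> t = F (x + t *\<^sub>R h) - t * (G x \<bullet> h) - L / 2 * t\<^sup>2 * (norm h)\<^sup>2" for t
  have "\<phi> 1 \<le> \<phi> 0"
  proof (rule DERIV_nonpos_imp_nonincreasing[where f = \<phi>])
    fix t :: real assume t: "0 \<le> t" "t \<le> 1"
    have deriv: "(\<phi> has_real_derivative
        (G (x + t *\<^sub>R h) \<bullet> h - G x \<bullet> h - L / 2 * (2 * t) * (norm h)\<^sup>2)) (at t)"
      unfolding \<phi>_def
      by (intro DERIV_diff DERIV_cmult has_real_derivative_along_line[OF grad] DERIV_cmult_right)
         (auto intro!: derivative_eq_intros)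
    have "G (x + t *\<^sub>R h) \<bullet> h - G x \<bullet> h = (G (x + t *\<^sub>R h) - G x) \<bullet> h"
      by (simp add: inner_diff_left)
    also have "\<dots> \<le> norm (G (x + t *\<^sub>R h) - G x) * norm h"
      by (rule norm_cauchy_schwarz)
    also have "\<dots> \<le> (L * norm (t *\<^sub>R h)) * norm h"
      using smooth[unfolded L_smooth_grad_def, rule_format, of "x + t *\<^sub>R h" x]
      by (intro mult_right_mono) auto
    also have "\<dots> = L * t * (norm h)\<^sup>2"
      using t by (simp add: power2_eq_square)
    finally show "\<exists>D. DERIV \<phi> t :> D \<and> D \<le> 0"
      using deriv by (auto simp: algebra_simps)
  qed simp
  then show ?thesis by (simp add: \<phi>_def h_def)
qed

text \<open>Compare \<open>F\<close> at \<open>z = b - (1/L)(G b - G a)\<close> from below (convexity, tangent at \<open>a\<close>) and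
  from above (descent lemma at \<open>b\<close>).\<close>
lemma in_F0L_lower_bound:
  fixes F :: "'a::real_inner \<Rightarrow> real"
  assumes F: "in_F0L L F G" and grad: "\<And>z. (F has_derivative (\<lambda>h. G z \<bullet> h)) (at z)"
    and L: "L > 0"
  shows "F a + G a \<bullet> (b - a) + 1 / (2 * L) * (norm (G b - G a))\<^sup>2 \<le> F b"
proof -
  define g where "g = G b - G a"
  define z where "z = b - (1 / L) *\<^sub>R g"
  have convex: "convex_on UNIV F" and smooth: "L_smooth_grad L G"
    using F by (auto simp: in_F0L_def)
  have above: "F z \<le> F b + G b \<bullet> (z - b) + L / 2 * (norm (z - b))\<^sup>2"
    by (rule L_smooth_grad_descent[OF grad smooth])
  have below: "F a + G a \<bullet> (z - a) \<le> F z"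
    by (rule convex_on_gradient_inequality[OF convex grad])
  have "G a \<bullet> (z - a) = G a \<bullet> (b - a) + G a \<bullet> (z - b)"
    by (simp add: inner_diff_right)
  moreover have "G b \<bullet> (z - b) - G a \<bullet> (z - b) = - (1 / L) * (norm g)\<^sup>2"
    by (simp add: z_def g_def power2_norm_eq_inner inner_diff_left algebra_simps)
  moreover have "L / 2 * (norm (z - b))\<^sup>2 = 1 / (2 * L) * (norm g)\<^sup>2"
    using L by (simp add: z_def power2_eq_square field_simps)
  ultimately show ?thesis
    using above below by (simp add: g_def)
qed

lemma in_F0L_cocoercive:
  fixes F :: "'a::real_inner \<Rightarrow> real"
  assumes F: "in_F0L L F G" and grad: "\<And>z. (F has_derivative (\<lambda>h. G z \<bullet> h)) (at z)"
    and L: "L > 0"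
  shows "(norm (G y - G x))\<^sup>2 \<le> L * ((y - x) \<bullet> (G y - G x))"
proof -
  have "1 / L * (norm (G y - G x))\<^sup>2 \<le> (y - x) \<bullet> (G y - G x)"
    using in_F0L_lower_bound[OF F grad L, of x y] in_F0L_lower_bound[OF F grad L, of y x]
    by (simp add: norm_minus_commute inner_diff_left inner_diff_right inner_commute field_simps)
  then show ?thesis
    using L by (simp add: field_simps)
qed

lemma sum_grad_at_regularized_minimizer:
  fixes f :: "nat \<Rightarrow> 'a::real_inner \<Rightarrow> real"
  assumes n: "n \<ge> 1"
    and grad: "\<And>i x. i < n \<Longrightarrow> (f i has_derivative (\<lambda>h. gr i x \<bullet> h)) (at x)"
    and min: "\<And>x. (1 / real n) * (\<Sum>i<n. f i xs) + m / 2 * (norm xs)\<^sup>2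
                  \<le> (1 / real n) * (\<Sum>i<n. f i x) + m / 2 * (norm x)\<^sup>2"
  shows "(\<Sum>i<n. gr i xs) = - (m * real n) *\<^sub>R xs"
proof -
  define v where "v = (1 / real n) *\<^sub>R (\<Sum>i<n. gr i xs) + m *\<^sub>R xs"
  have "((\<lambda>x. \<Sum>i<n. f i x) has_derivative (\<lambda>h. \<Sum>i<n. gr i xs \<bullet> h)) (at xs)"
    by (rule has_derivative_sum) (simp add: grad)
  moreover have "((\<lambda>x. x \<bullet> x) has_derivative (\<lambda>h. xs \<bullet> h + h \<bullet> xs)) (at xs)"
    using has_derivative_inner[OF has_derivative_ident has_derivative_ident] by blast
  ultimately have "((\<lambda>x. (1 / real n) * (\<Sum>i<n. f i x) + m / 2 * (x \<bullet> x)) has_derivative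
      (\<lambda>h. (1 / real n) * (\<Sum>i<n. gr i xs \<bullet> h) + m / 2 * (xs \<bullet> h + h \<bullet> xs))) (at xs)"
    by (intro has_derivative_add has_derivative_mult_right)
  moreover have "\<forall>\<^sub>F x in at xs. (1 / real n) * (\<Sum>i<n. f i xs) + m / 2 * (xs \<bullet> xs)
      \<le> (1 / real n) * (\<Sum>i<n. f i x) + m / 2 * (x \<bullet> x)"
    using min by (simp add: power2_norm_eq_inner)
  ultimately have "(\<lambda>h. (1 / real n) * (\<Sum>i<n. gr i xs \<bullet> h) + m / 2 * (xs \<bullet> h + h \<bullet> xs)) = (\<lambda>h. 0)"
    by (rule has_derivative_local_min)
  from fun_cong[OF this, of v] have "v \<bullet> v = 0"
    by (simp add: v_def inner_add_left inner_sum_left inner_commute)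
  then have "real n *\<^sub>R v = 0" by simp
  then show ?thesis
    using n by (simp add: v_def scaleR_add_right algebra_simps eq_neg_iff_add_eq_0)
qed

section \<open>The SDCA iteration and its Lyapunov function\<close>

definition sdca_mean :: "nat \<Rightarrow> real \<Rightarrow> (nat \<Rightarrow> 'a::real_vector) \<Rightarrow> 'a" where
  "sdca_mean n m y = (1 / (m * real n)) *\<^sub>R (\<Sum>j<n. y j)"

definition sdca_update ::
    "nat \<Rightarrow> real \<Rightarrow> real \<Rightarrow> (nat \<Rightarrow> 'a::real_vector \<Rightarrow> 'a) \<Rightarrow> (nat \<Rightarrow> 'a) \<Rightarrow> nat \<Rightarrow> nat \<Rightarrow> 'a" where
  "sdca_update n m \<alpha> gr y i = y(i := y i - (\<alpha> * m * real n) *\<^sub>R (gr i (sdca_mean n m y) + y i))"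

definition sdca_lyapunov ::
    "nat \<Rightarrow> real \<Rightarrow> (nat \<Rightarrow> 'a::real_inner \<Rightarrow> 'a) \<Rightarrow> 'a \<Rightarrow> real \<Rightarrow> (nat \<Rightarrow> 'a) \<Rightarrow> real" where
  "sdca_lyapunov n m gr xs c y = (norm (sdca_mean n m y - xs))\<^sup>2 + c * (\<Sum>i<n. (norm (y i + gr i xs))\<^sup>2)"

text \<open>Nonnegativity, at every \<open>x\<close>, of the bracket in the averaged one-step identity.\<close>
definition sdca_stepsize_admissible ::
    "nat \<Rightarrow> real \<Rightarrow> real \<Rightarrow> (nat \<Rightarrow> 'a::real_inner \<Rightarrow> 'a) \<Rightarrow> 'a \<Rightarrow> bool" where
  "sdca_stepsize_admissible n m \<alpha> gr xs \<longleftrightarrow> (\<forall>x.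
     \<alpha> / (1 - \<alpha> * m * real n) * (\<Sum>i<n. (norm (gr i x - gr i xs))\<^sup>2)
       \<le> m * real n * (norm (x - xs))\<^sup>2 + 2 * ((x - xs) \<bullet> (\<Sum>i<n. gr i x - gr i xs)))"

lemma sdca_y_Suc_update:
  "sdca_y n m \<alpha> gr y0 I (Suc k) = sdca_update n m \<alpha> gr (sdca_y n m \<alpha> gr y0 I k) (I k)"
  by (auto simp: sdca_update_def sdca_mean_def Let_def fun_eq_iff)

lemma sdca_x_eq_mean: "sdca_x n m \<alpha> gr y0 I k = sdca_mean n m (sdca_y n m \<alpha> gr y0 I k)"
  by (simp add: sdca_x_def sdca_mean_def)

lemma sdca_y_cong:
  "(\<And>j. j < k \<Longrightarrow> I j = J j) \<Longrightarrow> sdca_y n m \<alpha> gr y0 I k = sdca_y n m \<alpha> gr y0 J k"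
  by (induction k) (simp_all add: sdca_y_Suc_update)

lemma sum_PiE_lessThan_Suc:
  "(\<Sum>J\<in>PiE {..<Suc k} (\<lambda>_. A). F J) = (\<Sum>I\<in>PiE {..<k} (\<lambda>_. A). \<Sum>i\<in>A. F (I(k := i)))"
proof -
  have insert: "{..<Suc k} = insert k {..<k}" by auto
  have "(\<Sum>J\<in>PiE {..<Suc k} (\<lambda>_. A). F J)
      = (\<Sum>p\<in>A \<times> PiE {..<k} (\<lambda>_. A). F ((\<lambda>(i, I). I(k := i)) p))"
    unfolding insert PiE_insert_eq
    by (subst sum.reindex) (auto intro: inj_combinator[of k "{..<k}" "\<lambda>_. A", simplified])
  also have "\<dots> = (\<Sum>i\<in>A. \<Sum>I\<in>PiE {..<k} (\<lambda>_. A). F (I(k := i)))"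
    by (simp add: sum.cartesian_product case_prod_unfold)
  also have "\<dots> = (\<Sum>I\<in>PiE {..<k} (\<lambda>_. A). \<Sum>i\<in>A. F (I(k := i)))"
    by (rule sum.swap)
  finally show ?thesis .
qed

lemma expect_idx_sdca_contraction:
  assumes n: "n \<ge> 1" and q: "0 \<le> q"
    and step: "\<And>y. (\<Sum>i<n. V (sdca_update n m \<alpha> gr y i)) \<le> real n * q * V y"
  shows "expect_idx n k (\<lambda>I. V (sdca_y n m \<alpha> gr y0 I k)) \<le> q ^ k * V y0"
proof (induction k)
  case 0
  then show ?case by (simp add: expect_idx_def)
next
  case (Suc k)
  let ?P = "PiE {..<k} (\<lambda>_. {..<n})"
  let ?Y = "\<lambda>I. sdca_y n m \<alpha> gr y0 I k"
  have Suc_upd: "sdca_y n m \<alpha> gr y0 (I(k := i)) (Suc k) = sdca_update n m \<alpha> gr (?Y I) i" for I i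
  proof -
    have "sdca_y n m \<alpha> gr y0 (I(k := i)) k = ?Y I"
      by (rule sdca_y_cong) simp
    then show ?thesis by (simp only: sdca_y_Suc_update fun_upd_same)
  qed
  have "expect_idx n (Suc k) (\<lambda>I. V (sdca_y n m \<alpha> gr y0 I (Suc k)))
      = (\<Sum>I\<in>?P. \<Sum>i<n. V (sdca_update n m \<alpha> gr (?Y I) i)) / real n ^ Suc k"
    unfolding expect_idx_def sum_PiE_lessThan_Suc Suc_upd ..
  also have "\<dots> \<le> (\<Sum>I\<in>?P. real n * q * V (?Y I)) / real n ^ Suc k"
    by (intro divide_right_mono sum_mono step) simp
  also have "\<dots> = q * expect_idx n k (\<lambda>I. V (?Y I))"
    using n by (simp add: expect_idx_def sum_distrib_left[symmetric] field_simps)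
  also have "\<dots> \<le> q * (q ^ k * V y0)"
    using Suc q by (rule mult_left_mono)
  finally show ?case by simp
qed

lemma sdca_lyapunov_update:
  fixes gr :: "nat \<Rightarrow> 'a::real_inner \<Rightarrow> 'a" and y :: "nat \<Rightarrow> 'a"
  assumes i: "i < n" and mn: "m * real n \<noteq> 0" and \<beta>1: "\<alpha> * m * real n \<noteq> 1"
    and c: "c = \<alpha> / ((1 - \<alpha> * m * real n) * m * real n)"
  defines "x \<equiv> sdca_mean n m y"
  shows "sdca_lyapunov n m gr xs c (sdca_update n m \<alpha> gr y i)
     = sdca_lyapunov n m gr xs c y - 2 * \<alpha> * ((x - xs) \<bullet> (gr i x + y i))
       + \<alpha>\<^sup>2 / (1 - \<alpha> * m * real n) * ((norm (gr i x - gr i xs))\<^sup>2 - (norm (y i + gr i xs))\<^sup>2)"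
proof -
  define u where "u = x - xs"
  define e where "e = y i + gr i xs"
  define d where "d = gr i x - gr i xs"
  define \<beta> where "\<beta> = \<alpha> * m * real n"
  define \<gamma> where "\<gamma> = \<alpha>\<^sup>2 / (1 - \<beta>)"
  define S where "S = (\<Sum>j<n. (norm (y j + gr j xs))\<^sup>2)"
  have step: "gr i x + y i = d + e"
    by (simp add: d_def e_def)
  have upd: "sdca_update n m \<alpha> gr y i j = y j - (if j = i then \<beta> *\<^sub>R (d + e) else 0)" for j
    by (simp add: sdca_update_def x_def[symmetric] \<beta>_def step)
  have "(\<Sum>j<n. sdca_update n m \<alpha> gr y i j) = (\<Sum>j<n. y j) - \<beta> *\<^sub>R (d + e)"
    unfolding upd sum_subtractf using i by (simp add: sum.delta)
  then have mean: "sdca_mean n m (sdca_update n m \<alpha> gr y i) = x - \<alpha> *\<^sub>R (d + e)"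
    using mn by (simp add: sdca_mean_def x_def \<beta>_def scaleR_diff_right)
  have "(\<Sum>j<n. (norm (sdca_update n m \<alpha> gr y i j + gr j xs))\<^sup>2)
      = (\<Sum>j<n. (norm (y j + gr j xs))\<^sup>2
          + (if j = i then (norm (e - \<beta> *\<^sub>R (d + e)))\<^sup>2 - (norm e)\<^sup>2 else 0))"
    by (intro sum.cong) (auto simp: upd e_def algebra_simps)
  also have "\<dots> = S + (norm (e - \<beta> *\<^sub>R (d + e)))\<^sup>2 - (norm e)\<^sup>2"
    using i by (simp add: sum.distrib S_def)
  finally have sq: "(\<Sum>j<n. (norm (sdca_update n m \<alpha> gr y i j + gr j xs))\<^sup>2)
      = S + (norm (e - \<beta> *\<^sub>R (d + e)))\<^sup>2 - (norm e)\<^sup>2" .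
  have "sdca_lyapunov n m gr xs c (sdca_update n m \<alpha> gr y i)
      = (norm (u - \<alpha> *\<^sub>R (d + e)))\<^sup>2 + c * (S + (norm (e - \<beta> *\<^sub>R (d + e)))\<^sup>2 - (norm e)\<^sup>2)"
    unfolding sdca_lyapunov_def mean sq by (simp add: u_def algebra_simps)
  also have "\<dots> = u \<bullet> u + c * S - 2 * \<alpha> * (u \<bullet> (d + e))
      + (\<alpha>\<^sup>2 + c * \<beta>\<^sup>2) * (d \<bullet> d + 2 * (d \<bullet> e) + e \<bullet> e) - 2 * (c * \<beta>) * (d \<bullet> e + e \<bullet> e)"
    unfolding power2_norm_eq_inner
    by (simp add: inner_add inner_diff inner_commute power2_eq_square algebra_simps)
  also have "\<dots> = u \<bullet> u + c * S - 2 * \<alpha> * (u \<bullet> (d + e)) + \<gamma> * (d \<bullet> d - e \<bullet> e)"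
  proof -
    have "c * \<beta> = \<gamma>" and "\<alpha>\<^sup>2 + c * \<beta>\<^sup>2 = \<gamma>"
      using \<beta>1 mn unfolding c \<gamma>_def \<beta>_def by (simp_all add: field_simps power2_eq_square)
    then show ?thesis by (simp add: algebra_simps)
  qed
  finally show ?thesis
    by (simp add: sdca_lyapunov_def u_def x_def d_def e_def \<gamma>_def \<beta>_def S_def step
        power2_norm_eq_inner)
qed

lemma sdca_lyapunov_contraction:
  fixes gr :: "nat \<Rightarrow> 'a::real_inner \<Rightarrow> 'a" and y :: "nat \<Rightarrow> 'a"
  assumes n: "n \<ge> 1" and m: "m > 0" and \<alpha>: "\<alpha> > 0" and \<beta>1: "\<alpha> * m * real n < 1"
    and fp: "(\<Sum>i<n. gr i xs) = - (m * real n) *\<^sub>R xs"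
    and adm: "sdca_stepsize_admissible n m \<alpha> gr xs"
    and c: "c = \<alpha> / ((1 - \<alpha> * m * real n) * m * real n)"
  shows "(\<Sum>i<n. sdca_lyapunov n m gr xs c (sdca_update n m \<alpha> gr y i))
      \<le> real n * (1 - m * \<alpha>) * sdca_lyapunov n m gr xs c y"
proof -
  define x where "x = sdca_mean n m y"
  define D where "D = (\<Sum>i<n. gr i x - gr i xs)"
  define Q where "Q = (\<Sum>i<n. (norm (gr i x - gr i xs))\<^sup>2)"
  define S where "S = (\<Sum>i<n. (norm (y i + gr i xs))\<^sup>2)"
  define \<gamma> where "\<gamma> = \<alpha>\<^sup>2 / (1 - \<alpha> * m * real n)"
  have mn: "m * real n \<noteq> 0"
    using m n by simp
  have "(\<Sum>i<n. y i) = (m * real n) *\<^sub>R x"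
    using mn by (simp add: x_def sdca_mean_def)
  then have steps: "(\<Sum>i<n. gr i x + y i) = D + (m * real n) *\<^sub>R (x - xs)"
    by (simp add: D_def sum.distrib sum_subtractf fp scaleR_diff_right)
  have "(\<Sum>i<n. sdca_lyapunov n m gr xs c (sdca_update n m \<alpha> gr y i))
      = (\<Sum>i<n. sdca_lyapunov n m gr xs c y - 2 * \<alpha> * ((x - xs) \<bullet> (gr i x + y i))
          + \<gamma> * ((norm (gr i x - gr i xs))\<^sup>2 - (norm (y i + gr i xs))\<^sup>2))"
    using \<beta>1 by (intro sum.cong) (simp_all add: sdca_lyapunov_update[OF _ mn _ c] x_def \<gamma>_def)
  also have "\<dots> = real n * sdca_lyapunov n m gr xs c y
        - 2 * \<alpha> * ((x - xs) \<bullet> (\<Sum>i<n. gr i x + y i)) + \<gamma> * (Q - S)"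
    by (simp add: Q_def S_def sum.distrib sum_subtractf inner_sum_right inner_add_right
        sum_distrib_left[symmetric] right_diff_distrib)
  also have "\<dots> = real n * sdca_lyapunov n m gr xs c y
        - \<alpha> * (2 * ((x - xs) \<bullet> D) + 2 * (m * real n) * (norm (x - xs))\<^sup>2) + \<gamma> * (Q - S)"
    unfolding steps by (simp add: inner_add_right power2_norm_eq_inner algebra_simps)
  also have "\<dots> \<le> real n * (1 - m * \<alpha>) * sdca_lyapunov n m gr xs c y"
  proof -
    have "\<gamma> * Q = \<alpha> * (\<alpha> / (1 - \<alpha> * m * real n) * Q)"
      by (simp add: \<gamma>_def power2_eq_square)
    also have "\<dots> \<le> \<alpha> * (m * real n * (norm (x - xs))\<^sup>2 + 2 * ((x - xs) \<bullet> D))"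
      using adm \<alpha> unfolding sdca_stepsize_admissible_def Q_def D_def
      by (intro mult_left_mono) auto
    finally have "\<gamma> * Q \<le> \<alpha> * (m * real n * (norm (x - xs))\<^sup>2 + 2 * ((x - xs) \<bullet> D))" .
    moreover have "\<gamma> = real n * m * \<alpha> * c"
      using \<beta>1 mn unfolding c \<gamma>_def by (simp add: field_simps power2_eq_square)
    ultimately show ?thesis
      by (simp add: sdca_lyapunov_def x_def[symmetric] S_def[symmetric] algebra_simps)
  qed
  finally show ?thesis .
qed

lemma sdca_linear_rate:
  fixes gr :: "nat \<Rightarrow> 'a::real_inner \<Rightarrow> 'a"
  assumes n: "n \<ge> 1" and m: "m > 0" and \<alpha>: "\<alpha> > 0" and \<beta>1: "\<alpha> * m * real n < 1"
    and fp: "(\<Sum>i<n. gr i xs) = - (m * real n) *\<^sub>R xs"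
    and adm: "sdca_stepsize_admissible n m \<alpha> gr xs"
  shows "expect_idx n k (\<lambda>I.
                (norm (sdca_x n m \<alpha> gr y0 I k - xs))\<^sup>2
                + \<alpha> / ((1 - \<alpha> * m * real n) * m * real n)
                  * (\<Sum>i<n. (norm (sdca_y n m \<alpha> gr y0 I k i + gr i xs))\<^sup>2))
             \<le> (1 - m * \<alpha>) ^ k *
               ((norm (sdca_x n m \<alpha> gr y0 (\<lambda>_. 0) 0 - xs))\<^sup>2
                + \<alpha> / ((1 - \<alpha> * m * real n) * m * real n)
                  * (\<Sum>i<n. (norm (y0 i + gr i xs))\<^sup>2))"
proof -
  let ?V = "sdca_lyapunov n m gr xs (\<alpha> / ((1 - \<alpha> * m * real n) * m * real n))"
  have "m * \<alpha> \<le> \<alpha> * m * real n"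
    using n m \<alpha> by (simp add: mult_le_cancel_left1)
  then have "0 \<le> 1 - m * \<alpha>"
    using \<beta>1 by simp
  then have "expect_idx n k (\<lambda>I. ?V (sdca_y n m \<alpha> gr y0 I k)) \<le> (1 - m * \<alpha>) ^ k * ?V y0"
    by (rule expect_idx_sdca_contraction[OF n])
       (rule sdca_lyapunov_contraction[OF n m \<alpha> \<beta>1 fp adm refl])
  then show ?thesis
    by (simp add: sdca_lyapunov_def sdca_x_eq_mean)
qed

section \<open>Admissible stepsizes\<close>

lemma sdca_stepsize_admissible_cocoercive:
  fixes gr :: "nat \<Rightarrow> 'a::real_inner \<Rightarrow> 'a"
  assumes L: "L > 0" and mn: "0 \<le> m * real n"
    and cocoercive: "\<And>i x. i < n \<Longrightarrow> (norm (gr i x - gr i xs))\<^sup>2 \<le> L * ((x - xs) \<bullet> (gr i x - gr i xs))"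
    and q: "0 \<le> \<alpha> / (1 - \<alpha> * m * real n)" "\<alpha> / (1 - \<alpha> * m * real n) * L \<le> 2"
  shows "sdca_stepsize_admissible n m \<alpha> gr xs"
  unfolding sdca_stepsize_admissible_def
proof
  fix x
  let ?q = "\<alpha> / (1 - \<alpha> * m * real n)"
  let ?K = "\<Sum>i<n. (norm (gr i x - gr i xs))\<^sup>2"
  let ?P = "(x - xs) \<bullet> (\<Sum>i<n. gr i x - gr i xs)"
  have K: "?K \<le> L * ?P"
    unfolding inner_sum_right sum_distrib_left using cocoercive by (intro sum_mono) auto
  moreover have "0 \<le> ?K"
    by (intro sum_nonneg) auto
  ultimately have "0 \<le> L * ?P"
    by linarith
  then have "0 \<le> ?P"
    using L by (simp add: zero_le_mult_iff)
  have "?q * ?K \<le> ?q * (L * ?P)"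
    using K q by (intro mult_left_mono) auto
  also have "\<dots> = (?q * L) * ?P"
    by (simp only: mult.assoc)
  also have "\<dots> \<le> 2 * ?P"
    using q(2) \<open>0 \<le> ?P\<close> by (rule mult_right_mono)
  finally show "?q * ?K \<le> m * real n * (norm (x - xs))\<^sup>2 + 2 * ?P"
    using mn by (simp add: add_increasing)
qed

lemma sdca_stepsize_admissible_lipschitz:
  fixes gr :: "nat \<Rightarrow> 'a::real_inner \<Rightarrow> 'a"
  assumes lipschitz: "\<And>i x. i < n \<Longrightarrow> norm (gr i x - gr i xs) \<le> L * norm (x - xs)"
    and monotone: "\<And>x. 0 \<le> (x - xs) \<bullet> (\<Sum>i<n. gr i x - gr i xs)"
    and q: "0 \<le> \<alpha> / (1 - \<alpha> * m * real n)"
      "\<alpha> / (1 - \<alpha> * m * real n) * (real n * L\<^sup>2) \<le> m * real n"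
  shows "sdca_stepsize_admissible n m \<alpha> gr xs"
  unfolding sdca_stepsize_admissible_def
proof
  fix x
  let ?q = "\<alpha> / (1 - \<alpha> * m * real n)"
  have "(norm (gr i x - gr i xs))\<^sup>2 \<le> L\<^sup>2 * (norm (x - xs))\<^sup>2" if "i < n" for i
    using power_mono[OF lipschitz[OF that] norm_ge_zero] by (simp add: power_mult_distrib)
  then have "(\<Sum>i<n. (norm (gr i x - gr i xs))\<^sup>2) \<le> real n * L\<^sup>2 * (norm (x - xs))\<^sup>2"
    using sum_mono[of "{..<n}" "\<lambda>i. (norm (gr i x - gr i xs))\<^sup>2" "\<lambda>_. L\<^sup>2 * (norm (x - xs))\<^sup>2"]
    by simp
  then have "?q * (\<Sum>i<n. (norm (gr i x - gr i xs))\<^sup>2) \<le> ?q * (real n * L\<^sup>2 * (norm (x - xs))\<^sup>2)"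
    using q(1) by (rule mult_left_mono)
  also have "\<dots> = (?q * (real n * L\<^sup>2)) * (norm (x - xs))\<^sup>2"
    by (simp only: ac_simps)
  also have "\<dots> \<le> m * real n * (norm (x - xs))\<^sup>2"
    using q by (intro mult_right_mono) auto
  finally show "?q * (\<Sum>i<n. (norm (gr i x - gr i xs))\<^sup>2)
      \<le> m * real n * (norm (x - xs))\<^sup>2 + 2 * ((x - xs) \<bullet> (\<Sum>i<n. gr i x - gr i xs))"
    using monotone[of x] by linarith
qed

lemma in_F0L_stepsize_admissible:
  fixes f :: "nat \<Rightarrow> 'a::real_inner \<Rightarrow> real"
  assumes m: "m > 0" and L: "L > 0"
    and grad: "\<And>i x. i < n \<Longrightarrow> (f i has_derivative (\<lambda>h. gr i x \<bullet> h)) (at x)"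
    and F: "\<forall>i<n. in_F0L L (f i) (gr i)"
    and \<alpha>: "0 < \<alpha>" "\<alpha> \<le> 2 / (L + 2 * m * real n)"
  shows "\<alpha> * m * real n < 1" and "sdca_stepsize_admissible n m \<alpha> gr xs"
proof -
  have bound: "\<alpha> * (L + 2 * m * real n) \<le> 2"
    using \<alpha> L m by (simp add: le_divide_eq add_pos_nonneg)
  moreover have "0 < L * \<alpha>"
    using L \<alpha> by simp
  ultimately show \<beta>1: "\<alpha> * m * real n < 1"
    by (simp add: algebra_simps)
  then have "\<alpha> / (1 - \<alpha> * m * real n) * L \<le> 2"
    using bound by (simp add: divide_le_eq algebra_simps)
  then show "sdca_stepsize_admissible n m \<alpha> gr xs"
    using \<beta>1 \<alpha> m in_F0L_cocoercive[OF F[rule_format] grad L]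
    by (intro sdca_stepsize_admissible_cocoercive[OF L]) (simp_all add: inner_commute)
qed

lemma L_smooth_grad_stepsize_admissible:
  fixes f :: "nat \<Rightarrow> 'a::real_inner \<Rightarrow> real"
  assumes m: "m > 0" and L: "L > 0"
    and grad: "\<And>i x. i < n \<Longrightarrow> (f i has_derivative (\<lambda>h. gr i x \<bullet> h)) (at x)"
    and convex: "convex_on UNIV (\<lambda>x. \<Sum>i<n. f i x)"
    and smooth: "\<forall>i<n. L_smooth_grad L (gr i)"
    and \<alpha>: "0 < \<alpha>" "\<alpha> \<le> m / (L\<^sup>2 + m\<^sup>2 * real n)"
  shows "\<alpha> * m * real n < 1" and "sdca_stepsize_admissible n m \<alpha> gr xs"
proof -
  have a: "\<alpha> * (L\<^sup>2 + m\<^sup>2 * real n) \<le> m"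
    using \<alpha> L m by (simp add: le_divide_eq add_pos_nonneg)
  moreover have "0 < \<alpha> * L\<^sup>2"
    using L \<alpha> by simp
  ultimately have "m * (\<alpha> * m * real n) < m * 1"
    by (simp add: algebra_simps power2_eq_square)
  then show \<beta>1: "\<alpha> * m * real n < 1"
    using m by simp
  have "\<alpha> * L\<^sup>2 \<le> m * (1 - \<alpha> * m * real n)"
    using a by (simp add: algebra_simps power2_eq_square)
  then have "\<alpha> * L\<^sup>2 / (1 - \<alpha> * m * real n) \<le> m"
    using \<beta>1 by (simp add: pos_divide_le_eq mult.commute)
  then have "\<alpha> * L\<^sup>2 / (1 - \<alpha> * m * real n) * real n \<le> m * real n"
    by (rule mult_right_mono) simp
  then have q: "\<alpha> / (1 - \<alpha> * m * real n) * (real n * L\<^sup>2) \<le> m * real n"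
    by (simp add: ac_simps)
  have "((\<lambda>x. \<Sum>i<n. f i x) has_derivative (\<lambda>h. (\<Sum>i<n. gr i z) \<bullet> h)) (at z)" for z
    using has_derivative_sum[of "{..<n}" f "\<lambda>i h. gr i z \<bullet> h" "at z"] grad
    by (simp add: inner_sum_left)
  from convex_on_gradient_monotone[OF convex this]
  have monotone: "0 \<le> (x - xs) \<bullet> (\<Sum>i<n. gr i x - gr i xs)" for x
    by (simp add: sum_subtractf inner_commute)
  have lipschitz: "norm (gr i x - gr i xs) \<le> L * norm (x - xs)" if "i < n" for i x
    using smooth that unfolding L_smooth_grad_def by blast
  have "0 \<le> \<alpha> / (1 - \<alpha> * m * real n)"
    using \<alpha>(1) \<beta>1 by (intro divide_nonneg_pos) linarith+
  from sdca_stepsize_admissible_lipschitz[OF lipschitz monotone this q]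
  show "sdca_stepsize_admissible n m \<alpha> gr xs" .
qed

lemma sdca_default_stepsize:
  fixes m L :: real
  assumes m: "m > 0" and L: "L > 0" and n: "n \<ge> 1"
  defines "\<alpha> \<equiv> m / (m\<^sup>2 * real n + L\<^sup>2)"
  shows "0 < \<alpha>" and "\<alpha> \<le> m / (L\<^sup>2 + m\<^sup>2 * real n)"
    and "\<alpha> / ((1 - \<alpha> * m * real n) * m * real n) = 1 / (L\<^sup>2 * real n)"
    and "1 - m * \<alpha> = 1 - m\<^sup>2 / (m\<^sup>2 * real n + L\<^sup>2)"
proof -
  define D where "D = m\<^sup>2 * real n + L\<^sup>2"
  have D: "D > 0"
    using L m by (simp add: D_def add_nonneg_pos)
  then show "0 < \<alpha>" and "\<alpha> \<le> m / (L\<^sup>2 + m\<^sup>2 * real n)"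
    using m by (simp_all add: \<alpha>_def D_def add.commute)
  have \<alpha>D: "\<alpha> = m / D"
    by (simp add: \<alpha>_def D_def)
  have "1 - \<alpha> * m * real n = L\<^sup>2 / D"
    using D unfolding \<alpha>D by (simp add: field_simps) (simp add: D_def power2_eq_square)
  then have "\<alpha> / ((1 - \<alpha> * m * real n) * m * real n) = (m / D) / (L\<^sup>2 / D * m * real n)"
    unfolding \<alpha>D by simp
  also have "\<dots> = 1 / (L\<^sup>2 * real n)"
    using D m n L by (simp add: field_simps)
  finally show "\<alpha> / ((1 - \<alpha> * m * real n) * m * real n) = 1 / (L\<^sup>2 * real n)" .
  show "1 - m * \<alpha> = 1 - m\<^sup>2 / (m\<^sup>2 * real n + L\<^sup>2)"
    by (simp add: \<alpha>_def power2_eq_square)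
qed

theorem corollary3:
  fixes f :: "nat \<Rightarrow> 'a::euclidean_space \<Rightarrow> real"
    and gr :: "nat \<Rightarrow> 'a \<Rightarrow> 'a"
    and n :: nat and m L :: real and xs :: 'a and y0 :: "nat \<Rightarrow> 'a"
  assumes n_pos: "n \<ge> 1"
    and m_pos: "m > 0"
    and L_pos: "L > 0"
    and grad: "\<And>i x. i < n \<Longrightarrow> (f i has_derivative (\<lambda>h. gr i x \<bullet> h)) (at x)"
    and grad_cont: "\<And>i. i < n \<Longrightarrow> continuous_on UNIV (gr i)"
    and min: "\<And>x. (1 / real n) * (\<Sum>i<n. f i xs) + m / 2 * (norm xs)\<^sup>2
                  \<le> (1 / real n) * (\<Sum>i<n. f i x) + m / 2 * (norm x)\<^sup>2"
    and sumF: "in_F0L L (\<lambda>x. \<Sum>i<n. f i x) (\<lambda>x. \<Sum>i<n. gr i x)"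
  shows
   "((\<forall>i<n. in_F0L L (f i) (gr i)) \<longrightarrow>
      (\<forall>\<alpha>. 0 < \<alpha> \<and> \<alpha> \<le> 2 / (L + 2 * m * real n) \<longrightarrow>
        (\<forall>k. expect_idx n k (\<lambda>I.
                (norm (sdca_x n m \<alpha> gr y0 I k - xs))\<^sup>2
                + \<alpha> / ((1 - \<alpha> * m * real n) * m * real n)
                  * (\<Sum>i<n. (norm (sdca_y n m \<alpha> gr y0 I k i + gr i xs))\<^sup>2))
             \<le> (1 - m * \<alpha>) ^ k *
               ((norm (sdca_x n m \<alpha> gr y0 (\<lambda>_. 0) 0 - xs))\<^sup>2
                + \<alpha> / ((1 - \<alpha> * m * real n) * m * real n)
                  * (\<Sum>i<n. (norm (y0 i + gr i xs))\<^sup>2)))))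
    \<and>
    ((\<forall>i<n. L_smooth_grad L (gr i)) \<longrightarrow>
      (\<forall>\<alpha>. 0 < \<alpha> \<and> \<alpha> \<le> m / (L\<^sup>2 + m\<^sup>2 * real n) \<longrightarrow>
        (\<forall>k. expect_idx n k (\<lambda>I.
                (norm (sdca_x n m \<alpha> gr y0 I k - xs))\<^sup>2
                + \<alpha> / ((1 - \<alpha> * m * real n) * m * real n)
                  * (\<Sum>i<n. (norm (sdca_y n m \<alpha> gr y0 I k i + gr i xs))\<^sup>2))
             \<le> (1 - m * \<alpha>) ^ k *
               ((norm (sdca_x n m \<alpha> gr y0 (\<lambda>_. 0) 0 - xs))\<^sup>2
                + \<alpha> / ((1 - \<alpha> * m * real n) * m * real n)
                  * (\<Sum>i<n. (norm (y0 i + gr i xs))\<^sup>2))))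
      \<and>
      (let \<alpha> = m / (m\<^sup>2 * real n + L\<^sup>2) in
        \<forall>k. expect_idx n k (\<lambda>I.
                (norm (sdca_x n m \<alpha> gr y0 I k - xs))\<^sup>2
                + 1 / (L\<^sup>2 * real n)
                  * (\<Sum>i<n. (norm (sdca_y n m \<alpha> gr y0 I k i + gr i xs))\<^sup>2))
             \<le> (1 - m\<^sup>2 / (m\<^sup>2 * real n + L\<^sup>2)) ^ k *
               ((norm (sdca_x n m \<alpha> gr y0 (\<lambda>_. 0) 0 - xs))\<^sup>2
                + 1 / (L\<^sup>2 * real n) * (\<Sum>i<n. (norm (y0 i + gr i xs))\<^sup>2))))"
proof -
  have fp: "(\<Sum>i<n. gr i xs) = - (m * real n) *\<^sub>R xs"
    by (rule sum_grad_at_regularized_minimizer[OF n_pos grad min])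
  have convex: "convex_on UNIV (\<lambda>x. \<Sum>i<n. f i x)"
    using sumF by (simp add: in_F0L_def)
  note rate = sdca_linear_rate[where gr = gr and xs = xs, OF n_pos m_pos _ _ fp]
  note stepsize1 = in_F0L_stepsize_admissible[OF m_pos L_pos]
  note stepsize2 = L_smooth_grad_stepsize_admissible[OF m_pos L_pos _ convex]
  note default = sdca_default_stepsize[OF m_pos L_pos n_pos]
  show ?thesis
    using rate[OF _ stepsize1] rate[OF _ stepsize2]
      rate[OF default(1) stepsize2[OF _ _ default(1,2)]] grad
    unfolding Let_def default(3,4) by blast
qed

end
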